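(* Let $s\in\{+1,-1\}$ and $N\ge1$. Let $f:H_N\to\mathbb R$ be nonzero with $\sum_{x\in H_N}f(x)\le0$ and $sf(\mathbf 1)\le0$. Then $$\#\{x\in H_N: f(x)<0\}\cdot\#\{S\subseteq[N]: s\widehat f(S)<0\}\ \ge\ 2^{N-4}.$$ In particular, if there are integers $r,k\ge1$ with $f(x)\ge0$ whenever $d_H(x,\mathbf 1)\ge r$ and $s\widehat f(S)\ge0$ whenever $\#S\ge k$, then $$\sum_{n=1}^{r}\binom{N}{n-1}\cdot\sum_{n=1}^{k}\binom{N}{n-1}\ \ge\ 2^{N-4}.$$
   Context: $H_N=\{-1,1\}^N$, $[N]=\{1,\dots,N\}$, $\mathbf 1=(1,\dots,1)$, and $d_H(x,y)=\#\{n\in[N]: x_n\neq y_n\}$ is the Hamming distance. For $S\subseteq[N]$, $\varphi_S(x)=\prod_{i\in S}x_i$ (with $\varphi_\emptyset\equiv1$), and $\widehat f(S)=2^{-N}\sum_{x\in H_N}f(x)\varphi_S(x)$, so that $f=\sum_S\widehat f(S)\varphi_S$. *)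

theory Defs
  imports Complex_Main "HOL-Library.FuncSet"
begin

definition hcube :: "nat \<Rightarrow> (nat \<Rightarrow> real) set" where
  "hcube N = ({1..N} \<rightarrow>\<^sub>E {-1, 1})"

definition ones :: "nat \<Rightarrow> (nat \<Rightarrow> real)" where
  "ones N = restrict (\<lambda>_. 1) {1..N}"

definition hamming :: "nat \<Rightarrow> (nat \<Rightarrow> real) \<Rightarrow> (nat \<Rightarrow> real) \<Rightarrow> nat" where
  "hamming N x y = card {n \<in> {1..N}. x n \<noteq> y n}"

definition walsh :: "nat set \<Rightarrow> (nat \<Rightarrow> real) \<Rightarrow> real" where
  "walsh S x = (\<Prod>i\<in>S. x i)"

definition fourier :: "nat \<Rightarrow> ((nat \<Rightarrow> real) \<Rightarrow> real) \<Rightarrow> nat set \<Rightarrow> real" where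
  "fourier N f S = (\<Sum>x\<in>hcube N. f x * walsh S x) / 2 ^ N"

end

theory Submission
  imports Defs
begin

text \<open>Let \<open>L = \<Sum>\<^sub>x |f x|\<close> and \<open>M = \<Sum>\<^sub>S |f\<^sup>^(S)|\<close>. Trivially \<open>|f\<^sup>^(S)| \<le> L / 2\<^sup>N\<close> and,
  by Fourier inversion, \<open>|f x| \<le> M\<close>. Since \<open>\<Sum>\<^sub>x f x \<le> 0\<close>, at least half of \<open>L\<close> sits on
  the negative values of \<open>f\<close>, so \<open>L \<le> 2 #{f < 0} M\<close>; since
  \<open>\<Sum>\<^sub>S s f\<^sup>^(S) = s f(\<one>) \<le> 0\<close>, likewise \<open>M \<le> 2 #{s f\<^sup>^ < 0} L / 2\<^sup>N\<close>. Multiplying gives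
  \<open>2\<^sup>N \<le> 4 #{f < 0} #{s f\<^sup>^ < 0}\<close>. Under the support conditions the negative values of
  \<open>f\<close> lie in the Hamming ball of radius \<open>r - 1\<close> around \<open>\<one>\<close> and the negative
  coefficients on sets of size \<open>< k\<close>, whence the second bound.\<close>

lemma hcube_value: "x \<in> hcube N \<Longrightarrow> i \<in> {1..N} \<Longrightarrow> x i = 1 \<or> x i = -1"
  unfolding hcube_def by (auto simp: PiE_def Pi_def)

lemma hcube_undefined: "x \<in> hcube N \<Longrightarrow> i \<notin> {1..N} \<Longrightarrow> x i = undefined"
  unfolding hcube_def by (auto simp: PiE_def extensional_def)

lemma finite_hcube: "finite (hcube N)"
  unfolding hcube_def by (intro finite_PiE) auto

lemma ones_in_hcube: "ones N \<in> hcube N"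
  unfolding hcube_def ones_def by auto

lemma hamming_ones: "hamming N x (ones N) = card {n \<in> {1..N}. x n \<noteq> 1}"
  unfolding hamming_def ones_def by (intro arg_cong[where f=card]) auto

lemma inj_on_hcube_non_ones: "inj_on (\<lambda>x. {n \<in> {1..N}. x n \<noteq> 1}) (hcube N)"
proof (rule inj_onI, rule ext)
  fix x y i
  assume x: "x \<in> hcube N" and y: "y \<in> hcube N"
    and eq: "{n \<in> {1..N}. x n \<noteq> 1} = {n \<in> {1..N}. y n \<noteq> 1}"
  show "x i = y i"
  proof (cases "i \<in> {1..N}")
    case True
    then have "x i \<noteq> 1 \<longleftrightarrow> y i \<noteq> 1" using eq by blast
    then show ?thesis using hcube_value[OF x True] hcube_value[OF y True] by auto
  qed (simp add: hcube_undefined[OF x] hcube_undefined[OF y])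
qed

lemma abs_walsh_hcube: "x \<in> hcube N \<Longrightarrow> S \<subseteq> {1..N} \<Longrightarrow> \<bar>walsh S x\<bar> = 1"
  unfolding walsh_def abs_prod
  by (rule prod.neutral) (use hcube_value in fastforce)

lemma walsh_ones: "S \<subseteq> {1..N} \<Longrightarrow> walsh S (ones N) = 1"
  unfolding walsh_def ones_def by (intro prod.neutral) auto

lemma sum_walsh_mult:
  "(\<Sum>S\<in>Pow {1..N}. walsh S x * walsh S y) = (\<Prod>i\<in>{1..N}. x i * y i + 1)"
proof -
  have "(\<Sum>S\<in>Pow {1..N}. walsh S x * walsh S y)
      = (\<Sum>S\<in>Pow {1..N}. (\<Prod>i\<in>S. x i * y i) * (\<Prod>i\<in>{1..N} - S. 1))"
    unfolding walsh_def by (simp only: prod.distrib prod.neutral_const mult_1_right)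
  also have "\<dots> = (\<Prod>i\<in>{1..N}. x i * y i + 1)"
    by (subst prod_add) auto
  finally show ?thesis .
qed

lemma walsh_orthogonality:
  assumes x: "x \<in> hcube N" and y: "y \<in> hcube N"
  shows "(\<Sum>S\<in>Pow {1..N}. walsh S x * walsh S y) = (if x = y then 2 ^ N else 0)"
proof (cases "x = y")
  case True
  have "x i * y i + 1 = 2" if "i \<in> {1..N}" for i
    using hcube_value[OF x that] True by auto
  then have "(\<Prod>i\<in>{1..N}. x i * y i + 1) = (\<Prod>i\<in>{1..N}. 2)"
    by (intro prod.cong) auto
  then show ?thesis unfolding sum_walsh_mult using True by simp
next
  case False
  then obtain i where xy: "x i \<noteq> y i" by auto
  have i: "i \<in> {1..N}"
  proof (rule ccontr)
    assume "i \<notin> {1..N}"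
    then show False using xy hcube_undefined[OF x] hcube_undefined[OF y] by simp
  qed
  have "x i * y i + 1 = 0" using hcube_value[OF x i] hcube_value[OF y i] xy by auto
  then have "(\<Prod>i\<in>{1..N}. x i * y i + 1) = 0" using i by (intro prod_zero) auto
  then show ?thesis unfolding sum_walsh_mult using False by simp
qed

lemma fourier_inversion:
  assumes y: "y \<in> hcube N"
  shows "(\<Sum>S\<in>Pow {1..N}. fourier N f S * walsh S y) = f y"
proof -
  have "(\<Sum>S\<in>Pow {1..N}. fourier N f S * walsh S y)
      = (\<Sum>S\<in>Pow {1..N}. \<Sum>x\<in>hcube N. f x * (walsh S x * walsh S y)) / 2 ^ N"
    unfolding fourier_def sum_divide_distrib
    by (simp add: sum_distrib_right mult.assoc)
  also have "\<dots> = (\<Sum>x\<in>hcube N. f x * (\<Sum>S\<in>Pow {1..N}. walsh S x * walsh S y)) / 2 ^ N"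
    by (subst sum.swap) (simp add: sum_distrib_left)
  also have "\<dots> = (\<Sum>x\<in>hcube N. if x = y then f y * 2 ^ N else 0) / 2 ^ N"
    by (intro arg_cong[where f="\<lambda>t. t / 2 ^ N"] sum.cong refl) (subst walsh_orthogonality[OF _ y], assumption, simp)
  also have "\<dots> = f y"
    using y finite_hcube by (simp add: sum.delta')
  finally show ?thesis .
qed

lemma sum_fourier: "(\<Sum>S\<in>Pow {1..N}. fourier N f S) = f (ones N)"
  using fourier_inversion[OF ones_in_hcube, of N f] by (simp add: walsh_ones)

lemma abs_fourier_le: "S \<subseteq> {1..N} \<Longrightarrow> \<bar>fourier N f S\<bar> \<le> (\<Sum>x\<in>hcube N. \<bar>f x\<bar>) / 2 ^ N"
  unfolding fourier_def
  using sum_abs[of "\<lambda>x. f x * walsh S x" "hcube N"]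
  by (simp add: abs_mult abs_walsh_hcube divide_right_mono)

lemma abs_le_sum_abs_fourier:
  assumes "x \<in> hcube N"
  shows "\<bar>f x\<bar> \<le> (\<Sum>S\<in>Pow {1..N}. \<bar>fourier N f S\<bar>)"
proof -
  have "\<bar>f x\<bar> = \<bar>\<Sum>S\<in>Pow {1..N}. fourier N f S * walsh S x\<bar>"
    using fourier_inversion[OF assms] by simp
  also have "\<dots> \<le> (\<Sum>S\<in>Pow {1..N}. \<bar>fourier N f S * walsh S x\<bar>)"
    by (rule sum_abs)
  also have "\<dots> = (\<Sum>S\<in>Pow {1..N}. \<bar>fourier N f S\<bar>)"
    using abs_walsh_hcube[OF assms] by (intro sum.cong) (auto simp: abs_mult)
  finally show ?thesis .
qed

lemma sum_abs_le_twice_negative_part: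
  fixes g :: "'a \<Rightarrow> real"
  assumes "finite A" and "(\<Sum>x\<in>A. g x) \<le> 0"
  shows "(\<Sum>x\<in>A. \<bar>g x\<bar>) \<le> 2 * (\<Sum>x\<in>{x \<in> A. g x < 0}. \<bar>g x\<bar>)"
proof -
  have "(\<Sum>x\<in>A. g x) = (\<Sum>x\<in>A. \<bar>g x\<bar>) - 2 * (\<Sum>x\<in>A. if g x < 0 then \<bar>g x\<bar> else 0)"
    by (simp add: sum_distrib_left flip: sum_subtractf) (intro sum.cong, auto)
  moreover have "(\<Sum>x\<in>{x \<in> A. g x < 0}. \<bar>g x\<bar>) = (\<Sum>x\<in>A. if g x < 0 then \<bar>g x\<bar> else 0)"
    using assms(1) by (rule sum.inter_filter)
  ultimately show ?thesis
    using assms(2) by linarith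
qed

theorem hcube_uncertainty_principle:
  fixes f :: "(nat \<Rightarrow> real) \<Rightarrow> real" and s :: real
  assumes s: "\<bar>s\<bar> = 1"
    and nonzero: "\<exists>x\<in>hcube N. f x \<noteq> 0"
    and sum_le: "(\<Sum>x\<in>hcube N. f x) \<le> 0"
    and ones_le: "s * f (ones N) \<le> 0"
  shows "2 ^ N \<le> 4 * real (card {x \<in> hcube N. f x < 0})
                     * real (card {S. S \<subseteq> {1..N} \<and> s * fourier N f S < 0})"
proof -
  define L where "L = (\<Sum>x\<in>hcube N. \<bar>f x\<bar>)"
  define M where "M = (\<Sum>S\<in>Pow {1..N}. \<bar>fourier N f S\<bar>)"
  define A where "A = {x \<in> hcube N. f x < 0}"
  define B where "B = {S \<in> Pow {1..N}. s * fourier N f S < 0}"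
  have "L \<le> 2 * (\<Sum>x\<in>A. \<bar>f x\<bar>)"
    unfolding L_def A_def using sum_abs_le_twice_negative_part[OF finite_hcube sum_le] .
  also have "(\<Sum>x\<in>A. \<bar>f x\<bar>) \<le> real (card A) * M"
    unfolding A_def M_def by (rule sum_bounded_above) (blast intro: abs_le_sum_abs_fourier)
  finally have L_le: "L \<le> 2 * real (card A) * M" by simp
  have "(\<Sum>S\<in>Pow {1..N}. s * fourier N f S) \<le> 0"
    using ones_le sum_fourier[of N f] by (simp flip: sum_distrib_left)
  then have "M \<le> 2 * (\<Sum>S\<in>B. \<bar>s * fourier N f S\<bar>)"
    using sum_abs_le_twice_negative_part[of "Pow {1..N}" "\<lambda>S. s * fourier N f S"]
    unfolding M_def B_def by (simp add: abs_mult s)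
  also have "(\<Sum>S\<in>B. \<bar>s * fourier N f S\<bar>) \<le> real (card B) * (L / 2 ^ N)"
    unfolding B_def L_def by (rule sum_bounded_above) (simp add: abs_mult s abs_fourier_le)
  finally have M_le: "M \<le> 2 * real (card B) * L / 2 ^ N" by simp
  obtain x where x: "x \<in> hcube N" "f x \<noteq> 0" using nonzero by blast
  have "0 < \<bar>f x\<bar>" using x by simp
  also have "\<bar>f x\<bar> \<le> L" unfolding L_def using x finite_hcube by (intro member_le_sum) auto
  finally have "0 < L" .
  have "L \<le> 2 * real (card A) * (2 * real (card B) * L / 2 ^ N)"
    using L_le M_le by (smt (verit) mult_left_mono of_nat_0_le_iff)
  then have "2 ^ N \<le> 4 * real (card A) * real (card B)"
    using \<open>0 < L\<close> by (simp add: field_simps)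
  moreover have "B = {S. S \<subseteq> {1..N} \<and> s * fourier N f S < 0}" unfolding B_def by auto
  ultimately show ?thesis unfolding A_def by simp
qed

lemma card_subsets_card_less:
  assumes "finite A"
  shows "card {T. T \<subseteq> A \<and> card T < r} = (\<Sum>n=1..r. card A choose (n - 1))"
proof (induction r)
  case (Suc r)
  have "{T. T \<subseteq> A \<and> card T < Suc r} = {T. T \<subseteq> A \<and> card T < r} \<union> {T. T \<subseteq> A \<and> card T = r}"
    by auto
  moreover have "card ({T. T \<subseteq> A \<and> card T < r} \<union> {T. T \<subseteq> A \<and> card T = r})
      = card {T. T \<subseteq> A \<and> card T < r} + card {T. T \<subseteq> A \<and> card T = r}"
    using assms by (intro card_Un_disjoint) auto
  ultimately show ?case using Suc n_subsets[OF assms, of r] by simp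
qed simp

lemma card_negative_le_hamming_ball:
  fixes f :: "(nat \<Rightarrow> real) \<Rightarrow> real"
  assumes "\<forall>x\<in>hcube N. hamming N x (ones N) \<ge> r \<longrightarrow> f x \<ge> 0"
  shows "card {x \<in> hcube N. f x < 0} \<le> (\<Sum>n=1..r. N choose (n - 1))"
proof -
  let ?g = "\<lambda>x. {n \<in> {1..N}. x n \<noteq> 1}"
  have "card (?g x) < r" if "x \<in> hcube N" "f x < 0" for x
  proof -
    have "\<not> r \<le> hamming N x (ones N)" using assms that by force
    then show ?thesis by (simp add: hamming_ones)
  qed
  then have "?g ` {x \<in> hcube N. f x < 0} \<subseteq> {T. T \<subseteq> {1..N} \<and> card T < r}"
    by auto
  moreover have "inj_on ?g {x \<in> hcube N. f x < 0}"
    by (rule inj_on_subset[OF inj_on_hcube_non_ones]) auto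
  ultimately have "card {x \<in> hcube N. f x < 0} \<le> card {T. T \<subseteq> {1..N} \<and> card T < r}"
    by (intro card_inj_on_le) auto
  then show ?thesis by (simp add: card_subsets_card_less)
qed

lemma card_negative_fourier_le:
  assumes "\<forall>S. S \<subseteq> {1..N} \<longrightarrow> card S \<ge> k \<longrightarrow> s * fourier N f S \<ge> 0"
  shows "card {S. S \<subseteq> {1..N} \<and> s * fourier N f S < 0} \<le> (\<Sum>n=1..k. N choose (n - 1))"
proof -
  have "{S. S \<subseteq> {1..N} \<and> s * fourier N f S < 0} \<subseteq> {T. T \<subseteq> {1..N} \<and> card T < k}"
    using assms by (auto simp: not_le[symmetric])
  then have "card {S. S \<subseteq> {1..N} \<and> s * fourier N f S < 0} \<le> card {T. T \<subseteq> {1..N} \<and> card T < k}"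
    by (intro card_mono) auto
  then show ?thesis by (simp add: card_subsets_card_less)
qed

theorem mainTheorem17:
  fixes N :: nat and s :: real and f :: "(nat \<Rightarrow> real) \<Rightarrow> real"
  assumes hs: "s \<in> {1, -1}"
    and hN: "N \<ge> 1"
    and hnz: "\<exists>x\<in>hcube N. f x \<noteq> 0"
    and hsum: "(\<Sum>x\<in>hcube N. f x) \<le> 0"
    and hone: "s * f (ones N) \<le> 0"
  shows "real (card {x \<in> hcube N. f x < 0} * card {S. S \<subseteq> {1..N} \<and> s * fourier N f S < 0})
           \<ge> 2 powr (real N - 4)
       \<and> (\<forall>r k :: nat. r \<ge> 1 \<longrightarrow> k \<ge> 1
            \<longrightarrow> (\<forall>x\<in>hcube N. hamming N x (ones N) \<ge> r \<longrightarrow> f x \<ge> 0)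
            \<longrightarrow> (\<forall>S. S \<subseteq> {1..N} \<longrightarrow> card S \<ge> k \<longrightarrow> s * fourier N f S \<ge> 0)
            \<longrightarrow> real ((\<Sum>n=1..r. N choose (n - 1)) * (\<Sum>n=1..k. N choose (n - 1)))
                  \<ge> 2 powr (real N - 4))"
proof -
  let ?a = "card {x \<in> hcube N. f x < 0}"
  let ?b = "card {S. S \<subseteq> {1..N} \<and> s * fourier N f S < 0}"
  have "2 ^ N \<le> 4 * real (?a * ?b)"
    using hcube_uncertainty_principle[OF _ hnz hsum hone] hs by auto
  moreover have "2 powr (real N - 4) = 2 ^ N / 16"
    by (simp add: powr_diff powr_realpow)
  ultimately have main: "2 powr (real N - 4) \<le> real (?a * ?b)"
    using of_nat_0_le_iff[of "?a * ?b"] by linarith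
  show ?thesis
  proof (intro conjI allI impI)
    fix r k :: nat
    assume "\<forall>x\<in>hcube N. hamming N x (ones N) \<ge> r \<longrightarrow> f x \<ge> 0"
      and "\<forall>S. S \<subseteq> {1..N} \<longrightarrow> card S \<ge> k \<longrightarrow> s * fourier N f S \<ge> 0"
    then have "?a * ?b \<le> (\<Sum>n=1..r. N choose (n - 1)) * (\<Sum>n=1..k. N choose (n - 1))"
      by (intro mult_le_mono card_negative_le_hamming_ball card_negative_fourier_le)
    then show "2 powr (real N - 4) \<le> real ((\<Sum>n=1..r. N choose (n - 1)) * (\<Sum>n=1..k. N choose (n - 1)))"
      using main of_nat_le_iff order_trans by blast
  qed (rule main)
qed

end
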